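(* Let $T$ be the linear operator on (real) $L^2(0,\pi/2)$ defined by $(Tf)(v)=\int_0^{(\pi/2)-v} f(u)\,du$. For every $f\in L^2(0,\pi/2)$ we have, with convergence in $L^2(0,\pi/2)$, $$f=\sum_{k=-\infty}^{\infty} f_k\cos((4k+1)u),\qquad f_k=\frac{4}{\pi}\int_0^{\pi/2} f(u)\cos((4k+1)u)\,du,$$ and for each integer $n\ge 0$, $$\int_0^{\pi/2} f(u)\,(T^nf)(u)\,du=\frac{\pi}{4}\sum_{k=-\infty}^{\infty}\frac{f_k^2}{(4k+1)^n}.$$
   Context: $T^0$ denotes the identity operator. *)

theory Defs
  imports "HOL-Analysis.Analysis"
begin

definition L2_on :: "(real \<Rightarrow> real) \<Rightarrow> real set \<Rightarrow> bool" where
  "L2_on f S \<longleftrightarrow> f measurable_on S \<and> (\<lambda>x. (f x)\<^sup>2) integrable_on S"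

definition T_op :: "(real \<Rightarrow> real) \<Rightarrow> (real \<Rightarrow> real)" where
  "T_op f = (\<lambda>v. integral {0..pi/2 - v} f)"

definition coeff_k :: "(real \<Rightarrow> real) \<Rightarrow> int \<Rightarrow> real" where
  "coeff_k f k = 4 / pi * integral {0..pi/2} (\<lambda>u. f u * cos ((4 * real_of_int k + 1) * u))"

end

(*
  The functions cos ((4k+1) u), k in Z, are orthogonal on [0, pi/2] with squared norm pi/4, and as
  4k+1 runs through the odd integers they are exactly the cos (m u) with m odd. Their span is dense
  in L2: truncate, approximate by continuous functions, write a continuous function as cos u * d u
  up to an error concentrated near pi/2, and approximate d uniformly by polynomials in cos 2u
  (Stone-Weierstrass); cos u times such a polynomial lies in the span because multiplication by
  cos 2u shifts odd frequencies by 2. Bessel's identity turns density into L2 convergence of the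
  symmetric partial sums and into Parseval's identity, which then polarizes.
  T maps cos ((4k+1) u) to cos ((4k+1) u) / (4k+1). As the coefficients of T g depend
  L1-continuously on g, density gives (T g)_k = g_k / (4k+1) for every g, and the identity for the
  integral of f * T^n f is polarized Parseval applied to f and T^n f.
*)

theory Submission
  imports Defs
begin

section \<open>Square-integrable functions\<close>

lemma L2_on_iff_borel_measurable:
  assumes "S \<in> sets lebesgue"
  shows "L2_on f S \<longleftrightarrow> f \<in> borel_measurable (lebesgue_on S) \<and> (\<lambda>x. (f x)\<^sup>2) integrable_on S"
  using assms by (simp add: L2_on_def measurable_on_iff_borel_measurable)

lemma L2_on_mult_absolutely_integrable:
  assumes S: "S \<in> sets lebesgue" and f: "L2_on f S" and g: "L2_on g S"
  shows "(\<lambda>x. f x * g x) absolutely_integrable_on S"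
proof (rule measurable_bounded_by_integrable_imp_absolutely_integrable[OF _ S])
  show "(\<lambda>x. f x * g x) \<in> borel_measurable (lebesgue_on S)"
    using f g S by (simp add: L2_on_iff_borel_measurable borel_measurable_times)
  show "(\<lambda>x. ((f x)\<^sup>2 + (g x)\<^sup>2) / 2) integrable_on S"
    using f g by (auto simp: L2_on_def intro!: integrable_add integrable_on_divide)
  show "norm (f x * g x) \<le> ((f x)\<^sup>2 + (g x)\<^sup>2) / 2" for x
  proof -
    have "0 \<le> (\<bar>f x\<bar> - \<bar>g x\<bar>)\<^sup>2" by simp
    then show ?thesis by (simp add: power2_eq_square algebra_simps abs_mult)
  qed
qed

lemma L2_on_mult_integrable:
  "S \<in> sets lebesgue \<Longrightarrow> L2_on f S \<Longrightarrow> L2_on g S \<Longrightarrow> (\<lambda>x. f x * g x) integrable_on S"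
  using L2_on_mult_absolutely_integrable absolutely_integrable_on_def by blast

lemma L2_on_add:
  assumes S: "S \<in> sets lebesgue" and f: "L2_on f S" and g: "L2_on g S"
  shows "L2_on (\<lambda>x. f x + g x) S"
  unfolding L2_on_def
proof
  show "(\<lambda>x. f x + g x) measurable_on S"
    using f g by (intro measurable_on_add) (simp_all add: L2_on_def)
  have "(\<lambda>x. (f x)\<^sup>2 + (g x)\<^sup>2 + 2 * (f x * g x)) integrable_on S"
    using f g L2_on_mult_integrable[OF S f g]
    by (auto simp: L2_on_def intro!: integrable_add integrable_on_mult_right)
  then show "(\<lambda>x. (f x + g x)\<^sup>2) integrable_on S"
    by (simp add: power2_sum algebra_simps)
qed

lemma L2_on_cmult:
  assumes "L2_on f S"
  shows "L2_on (\<lambda>x. c * f x) S"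
  using assms integrable_on_mult_right[of "\<lambda>x. (f x)\<^sup>2" S "c\<^sup>2"]
  by (simp add: L2_on_def power_mult_distrib measurable_on_cmul)

lemma L2_on_diff:
  assumes "S \<in> sets lebesgue" "L2_on f S" "L2_on g S"
  shows "L2_on (\<lambda>x. f x - g x) S"
  using L2_on_add[OF assms(1,2) L2_on_cmult[OF assms(3), of "-1"]] by simp

lemma L2_on_continuous:
  assumes "continuous_on {a..b} f"
  shows "L2_on f {a..b}"
  using assms continuous_imp_measurable_on_sets_lebesgue[OF assms]
  by (simp add: L2_on_iff_borel_measurable integrable_continuous_real continuous_on_power)

lemma L2_on_bounded:
  assumes "f \<in> borel_measurable (lebesgue_on {a..b})" "\<And>x. \<bar>f x\<bar> \<le> M"
  shows "L2_on f {a..b}"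
proof -
  have "{a..b} \<in> sets lebesgue" by simp
  moreover have "(\<lambda>x. (f x)\<^sup>2) integrable_on {a..b}"
  proof (rule measurable_bounded_by_integrable_imp_integrable_real)
    show "(\<lambda>x. (f x)\<^sup>2) \<in> borel_measurable (lebesgue_on {a..b})" using assms(1) by measurable
    show "(\<lambda>x. M\<^sup>2) integrable_on {a..b}" by (rule integrable_const_ivl)
    show "\<bar>(f x)\<^sup>2\<bar> \<le> M\<^sup>2" for x
      using power_mono[OF assms(2)[of x] abs_ge_zero, of 2] by simp
  qed simp
  ultimately show ?thesis using assms(1) by (simp add: L2_on_iff_borel_measurable)
qed

lemma L2_on_absolutely_integrable:
  assumes "L2_on f {a..b}"
  shows "f absolutely_integrable_on {a..b}"
  using L2_on_mult_absolutely_integrable[OF _ assms L2_on_continuous[of a b "\<lambda>x. 1"]] by simp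

lemma L2_on_integrable: "L2_on f {a..b} \<Longrightarrow> f integrable_on {a..b}"
  using L2_on_absolutely_integrable absolutely_integrable_on_def by blast

section \<open>The orthogonal system\<close>

definition cos_mode :: "int \<Rightarrow> real \<Rightarrow> real" where
  "cos_mode k u = cos ((4 * real_of_int k + 1) * u)"

definition mode_sum :: "(int \<Rightarrow> real) \<Rightarrow> int set \<Rightarrow> real \<Rightarrow> real" where
  "mode_sum d K = (\<lambda>u. \<Sum>k\<in>K. d k * cos_mode k u)"

lemma frequency_nonzero: "4 * real_of_int k + 1 \<noteq> 0"
proof
  assume "4 * real_of_int k + 1 = 0"
  then have "real_of_int (4 * k + 1) = 0" by simp
  then show False by presburger
qed

lemma has_integral_cos_mult:
  fixes a x :: real
  assumes "a \<noteq> 0" "0 \<le> x"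
  shows "((\<lambda>u. cos (a * u)) has_integral sin (a * x) / a) {0..x}"
proof -
  have "((\<lambda>u. cos (a * u)) has_integral (sin (a * x) / a - sin (a * 0) / a)) {0..x}"
    using assms
    by (intro fundamental_theorem_of_calculus)
       (auto intro!: derivative_eq_intros simp: has_real_derivative_iff_has_vector_derivative[symmetric])
  then show ?thesis by simp
qed

lemma has_integral_cos_even_multiple:
  fixes m :: int
  assumes "even m" "m \<noteq> 0"
  shows "((\<lambda>u. cos (of_int m * u)) has_integral 0) {0..pi/2}"
proof -
  have "sin (of_int m * (pi/2)) = 0"
    using assms(1) by (auto simp: sin_zero_iff_int)
  then show ?thesis
    using has_integral_cos_mult[of "of_int m" "pi/2"] assms(2) by simp
qed

lemma cos_mode_orthogonal:
  "((\<lambda>u. cos_mode j u * cos_mode k u) has_integral (if j = k then pi/4 else 0)) {0..pi/2}"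
proof -
  have prod: "cos_mode j u * cos_mode k u
      = cos (of_int (4 * (j - k)) * u) / 2 + cos (of_int (4 * (j + k) + 2) * u) / 2" for u
    by (simp add: cos_mode_def cos_times_cos algebra_simps add_divide_distrib)
  have "even (4 * (j + k) + 2)" "4 * (j + k) + 2 \<noteq> 0" by presburger+
  then have high: "((\<lambda>u. cos (of_int (4 * (j + k) + 2) * u) / 2) has_integral 0) {0..pi/2}"
    using has_integral_divide[OF has_integral_cos_even_multiple, of "4 * (j + k) + 2" 2] by simp
  have low: "((\<lambda>u. cos (of_int (4 * (j - k)) * u) / 2) has_integral (if j = k then pi/4 else 0)) {0..pi/2}"
  proof (cases "j = k")
    case True
    then show ?thesis using has_integral_const_real[of "1/2::real" 0 "pi/2"] by simp
  next
    case False
    then show ?thesis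
      using has_integral_divide[OF has_integral_cos_even_multiple, of "4 * (j - k)" 2] by simp
  qed
  show ?thesis unfolding prod using has_integral_add[OF low high] by simp
qed

lemma L2_on_cos_mode: "L2_on (cos_mode k) {a..b}"
  unfolding cos_mode_def by (intro L2_on_continuous continuous_intros)

lemma L2_on_mode_sum: "finite K \<Longrightarrow> L2_on (mode_sum d K) {a..b}"
  unfolding mode_sum_def cos_mode_def by (intro L2_on_continuous continuous_intros)

lemma coeff_k_cos_mode: "coeff_k f k = 4 / pi * integral {0..pi/2} (\<lambda>u. f u * cos_mode k u)"
  by (simp add: coeff_k_def cos_mode_def)

lemma coeff_k_cong:
  "(\<And>u. u \<in> {0..pi/2} \<Longrightarrow> f u = g u) \<Longrightarrow> coeff_k f k = coeff_k g k"
  unfolding coeff_k_def by (metis (no_types, lifting) integral_cong)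

lemma coeff_k_add:
  assumes "L2_on f {0..pi/2}" "L2_on g {0..pi/2}"
  shows "coeff_k (\<lambda>u. f u + g u) k = coeff_k f k + coeff_k g k"
  using L2_on_mult_integrable[OF _ assms(1) L2_on_cos_mode] L2_on_mult_integrable[OF _ assms(2) L2_on_cos_mode]
  by (simp add: coeff_k_cos_mode distrib_right integral_add distrib_left)

lemma coeff_k_diff:
  assumes "L2_on f {0..pi/2}" "L2_on g {0..pi/2}"
  shows "coeff_k (\<lambda>u. f u - g u) k = coeff_k f k - coeff_k g k"
  using L2_on_mult_integrable[OF _ assms(1) L2_on_cos_mode] L2_on_mult_integrable[OF _ assms(2) L2_on_cos_mode]
  by (simp add: coeff_k_cos_mode left_diff_distrib integral_diff right_diff_distrib)

lemma coeff_k_mode_sum: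
  assumes "finite K"
  shows "coeff_k (mode_sum d K) j = (if j \<in> K then d j else 0)"
proof -
  have "integral {0..pi/2} (\<lambda>u. mode_sum d K u * cos_mode j u)
      = (\<Sum>k\<in>K. d k * integral {0..pi/2} (\<lambda>u. cos_mode k u * cos_mode j u))"
    using assms has_integral_integrable[OF cos_mode_orthogonal]
    by (simp add: mode_sum_def sum_distrib_right mult.assoc integral_sum integrable_on_mult_right)
  also have "\<dots> = (\<Sum>k\<in>K. if k = j then d j * (pi/4) else 0)"
    using integral_unique[OF cos_mode_orthogonal] by (intro sum.cong) auto
  finally show ?thesis using assms by (simp add: coeff_k_cos_mode)
qed

lemma integral_mult_mode_sum:
  assumes "L2_on f {0..pi/2}" "finite K"
  shows "integral {0..pi/2} (\<lambda>u. f u * mode_sum d K u) = pi/4 * (\<Sum>k\<in>K. d k * coeff_k f k)"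
proof -
  have "(\<lambda>u. f u * cos_mode k u) integrable_on {0..pi/2}" for k
    using L2_on_mult_integrable[OF _ assms(1) L2_on_cos_mode] by simp
  then show ?thesis
    using assms(2)
    by (simp add: mode_sum_def sum_distrib_left sum_distrib_right integral_sum coeff_k_cos_mode
        mult.left_commute integrable_on_mult_right)
qed

lemma integral_sq_dist_mode_sum:
  assumes f: "L2_on f {0..pi/2}" and K: "finite K"
  shows "integral {0..pi/2} (\<lambda>u. (f u - mode_sum d K u)\<^sup>2)
       = integral {0..pi/2} (\<lambda>u. (f u)\<^sup>2) - pi/4 * (\<Sum>k\<in>K. (coeff_k f k)\<^sup>2)
         + pi/4 * (\<Sum>k\<in>K. (d k - coeff_k f k)\<^sup>2)"
proof -
  let ?S = "mode_sum d K"
  have S: "L2_on ?S {0..pi/2}" using L2_on_mode_sum[OF K] .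
  have "integral {0..pi/2} (\<lambda>u. (f u - ?S u)\<^sup>2)
      = integral {0..pi/2} (\<lambda>u. (f u)\<^sup>2) - 2 * integral {0..pi/2} (\<lambda>u. f u * ?S u)
        + integral {0..pi/2} (\<lambda>u. ?S u * ?S u)"
  proof -
    have "(\<lambda>u. (f u - ?S u)\<^sup>2) = (\<lambda>u. ((f u)\<^sup>2 - 2 * (f u * ?S u)) + ?S u * ?S u)"
      by (simp add: power2_eq_square algebra_simps)
    then show ?thesis
      using f S L2_on_mult_integrable[OF _ f S] L2_on_mult_integrable[OF _ S S]
      by (simp add: L2_on_def integral_add integral_diff integrable_diff integrable_on_mult_right)
  qed
  also have "\<dots> = integral {0..pi/2} (\<lambda>u. (f u)\<^sup>2) - pi/2 * (\<Sum>k\<in>K. d k * coeff_k f k)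
        + pi/4 * (\<Sum>k\<in>K. (d k)\<^sup>2)"
  proof -
    have "integral {0..pi/2} (\<lambda>u. ?S u * ?S u) = pi/4 * (\<Sum>k\<in>K. (d k)\<^sup>2)"
      using integral_mult_mode_sum[OF S K] K by (simp add: coeff_k_mode_sum power2_eq_square)
    then show ?thesis using integral_mult_mode_sum[OF f K, of d] by linarith
  qed
  also have "\<dots> = integral {0..pi/2} (\<lambda>u. (f u)\<^sup>2) - pi/4 * (\<Sum>k\<in>K. (coeff_k f k)\<^sup>2)
         + pi/4 * (\<Sum>k\<in>K. (d k - coeff_k f k)\<^sup>2)"
    by (simp add: power2_diff sum.distrib sum_subtractf sum_distrib_left algebra_simps)
  finally show ?thesis .
qed

lemma integral_sq_dist_coeff_k:
  assumes "L2_on f {0..pi/2}" "finite K"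
  shows "integral {0..pi/2} (\<lambda>u. (f u - mode_sum (coeff_k f) K u)\<^sup>2)
       = integral {0..pi/2} (\<lambda>u. (f u)\<^sup>2) - pi/4 * (\<Sum>k\<in>K. (coeff_k f k)\<^sup>2)"
  using integral_sq_dist_mode_sum[OF assms, of "coeff_k f"] by simp

lemma integral_sq_dist_coeff_k_le:
  assumes "L2_on f {0..pi/2}" "finite K"
  shows "integral {0..pi/2} (\<lambda>u. (f u - mode_sum (coeff_k f) K u)\<^sup>2)
       \<le> integral {0..pi/2} (\<lambda>u. (f u - mode_sum d K u)\<^sup>2)"
  using integral_sq_dist_mode_sum[OF assms, of d] integral_sq_dist_coeff_k[OF assms]
  by (simp add: sum_nonneg)

section \<open>The span of the system\<close>

inductive cos_mode_span :: "(real \<Rightarrow> real) \<Rightarrow> bool" where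
  zero: "cos_mode_span (\<lambda>u. 0)"
| add_mode: "cos_mode_span P \<Longrightarrow> cos_mode_span (\<lambda>u. P u + c * cos_mode k u)"

lemma cos_mode_span_cos_mode: "cos_mode_span (cos_mode k)"
  using cos_mode_span.add_mode[OF cos_mode_span.zero, of 1 k] by simp

lemma cos_mode_span_add:
  assumes "cos_mode_span P" "cos_mode_span Q"
  shows "cos_mode_span (\<lambda>u. P u + Q u)"
  using assms(2)
proof (induction Q rule: cos_mode_span.induct)
  case zero
  then show ?case using assms(1) by simp
next
  case (add_mode Q c k)
  then show ?case using cos_mode_span.add_mode[of "\<lambda>u. P u + Q u" c k] by (simp add: add.assoc)
qed

lemma cos_mode_span_cmult: "cos_mode_span P \<Longrightarrow> cos_mode_span (\<lambda>u. c * P u)"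
proof (induction P rule: cos_mode_span.induct)
  case zero
  then show ?case by (simp add: cos_mode_span.zero)
next
  case (add_mode P c' k)
  then show ?case
    using cos_mode_span.add_mode[of "\<lambda>u. c * P u" "c * c'" k] by (simp add: distrib_left mult.assoc)
qed

lemma cos_2_mult_cos_mode: "cos (2 * u) * cos_mode k u = cos_mode (-k-1) u / 2 + cos_mode (-k) u / 2"
proof -
  have "cos_mode (-k-1) u = cos (2 * u + (4 * real_of_int k + 1) * u)"
    by (subst cos_minus[symmetric]) (simp add: cos_mode_def algebra_simps)
  moreover have "cos_mode (-k) u = cos (2 * u - (4 * real_of_int k + 1) * u)"
    by (simp add: cos_mode_def algebra_simps)
  ultimately show ?thesis
    by (simp add: cos_mode_def cos_times_cos add_divide_distrib)
qed

lemma cos_mode_span_cos_2_mult: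
  "cos_mode_span P \<Longrightarrow> cos_mode_span (\<lambda>u. cos (2 * u) * P u)"
proof (induction P rule: cos_mode_span.induct)
  case zero
  then show ?case by (simp add: cos_mode_span.zero)
next
  case (add_mode P c k)
  have "cos_mode_span (\<lambda>u. cos (2 * u) * P u + c/2 * cos_mode (-k-1) u + c/2 * cos_mode (-k) u)"
    by (intro cos_mode_span.add_mode add_mode.IH)
  then show ?case
    by (simp add: distrib_left cos_2_mult_cos_mode mult.left_commute add.assoc add_divide_distrib)
qed

lemma cos_mode_span_repr:
  assumes "cos_mode_span P"
  shows "\<exists>d N. \<forall>M\<ge>N. P = mode_sum d {-int M..int M}"
proof -
  have "\<exists>d N. (\<forall>k. k \<notin> {-int N..int N} \<longrightarrow> d k = 0) \<and> (\<forall>M\<ge>N. P = mode_sum d {-int M..int M})"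
    using assms
  proof (induction P rule: cos_mode_span.induct)
    case zero
    show ?case by (rule exI[of _ "\<lambda>k. 0"]) (simp add: mode_sum_def)
  next
    case (add_mode P c k)
    then obtain d N where d0: "\<forall>k. k \<notin> {-int N..int N} \<longrightarrow> d k = 0"
      and dP: "\<forall>M\<ge>N. P = mode_sum d {-int M..int M}" by blast
    define N' where "N' = max N (nat \<bar>k\<bar>)"
    define d' where "d' = (\<lambda>j. d j + (if j = k then c else 0))"
    have "\<forall>j. j \<notin> {-int N'..int N'} \<longrightarrow> d' j = 0"
      using d0 by (auto simp: d'_def N'_def)
    moreover have "(\<lambda>u. P u + c * cos_mode k u) = mode_sum d' {-int M..int M}" if "N' \<le> M" for M
    proof -
      have "k \<in> {-int M..int M}" using that by (auto simp: N'_def)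
      then have "(\<Sum>j\<in>{-int M..int M}. (if j = k then c else 0) * cos_mode j u) = c * cos_mode k u" for u
        by (simp add: if_distrib[of "\<lambda>x. x * _"] cong: if_cong)
      moreover have "P = mode_sum d {-int M..int M}" using dP that by (simp add: N'_def)
      ultimately show ?thesis by (simp add: d'_def mode_sum_def distrib_right sum.distrib)
    qed
    ultimately show ?case by blast
  qed
  then show ?thesis by blast
qed

lemma continuous_on_cos_mode_span: "cos_mode_span P \<Longrightarrow> continuous_on S P"
proof (induction rule: cos_mode_span.induct)
  case (add_mode P c k)
  then show ?case unfolding cos_mode_def by (intro continuous_on_add[OF add_mode.IH] continuous_intros)
qed (rule continuous_on_const)

inductive cos_2_algebra :: "(real \<Rightarrow> real) \<Rightarrow> bool" where
  const: "cos_2_algebra (\<lambda>u. c)"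
| cos_2: "cos_2_algebra (\<lambda>u. cos (2 * u))"
| add: "cos_2_algebra f \<Longrightarrow> cos_2_algebra g \<Longrightarrow> cos_2_algebra (\<lambda>u. f u + g u)"
| mult: "cos_2_algebra f \<Longrightarrow> cos_2_algebra g \<Longrightarrow> cos_2_algebra (\<lambda>u. f u * g u)"

lemma continuous_on_cos_2_algebra: "cos_2_algebra e \<Longrightarrow> continuous_on S e"
  by (induction rule: cos_2_algebra.induct)
    (auto intro: continuous_on_add continuous_on_mult continuous_on_cos continuous_on_mult_left continuous_on_id)

lemma cos_mode_span_cos_2_algebra_mult:
  "cos_2_algebra e \<Longrightarrow> cos_mode_span P \<Longrightarrow> cos_mode_span (\<lambda>u. e u * P u)"
proof (induction e arbitrary: P rule: cos_2_algebra.induct)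
  case (const c)
  then show ?case by (rule cos_mode_span_cmult)
next
  case cos_2
  then show ?case by (rule cos_mode_span_cos_2_mult)
next
  case (add f g)
  then show ?case
    using cos_mode_span_add[of "\<lambda>u. f u * P u" "\<lambda>u. g u * P u"] by (simp add: distrib_right)
next
  case (mult f g)
  then show ?case by (simp add: mult.assoc)
qed

lemma cos_2_algebra_uniform_approx:
  assumes "continuous_on {0..pi/2} d" "0 < e"
  shows "\<exists>g. cos_2_algebra g \<and> (\<forall>x\<in>{0..pi/2}. \<bar>d x - g x\<bar> < e)"
proof (rule Stone_Weierstrass_HOL[where P = cos_2_algebra])
  fix x y :: real assume xy: "x \<in> {0..pi/2} \<and> y \<in> {0..pi/2} \<and> x \<noteq> y"
  then have "cos (2 * x) \<noteq> cos (2 * y)"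
    using cos_inj_pi[of "2 * x" "2 * y"] by auto
  then show "\<exists>f. cos_2_algebra f \<and> f x \<noteq> f y"
    using cos_2_algebra.cos_2 by blast
qed (auto intro: assms cos_2_algebra.intros continuous_on_cos_2_algebra)

section \<open>Density of the span\<close>

definition L2_approximable :: "real set \<Rightarrow> (real \<Rightarrow> real) set \<Rightarrow> (real \<Rightarrow> real) \<Rightarrow> bool" where
  "L2_approximable S A f \<longleftrightarrow> (\<forall>e>0. \<exists>g\<in>A. integral S (\<lambda>u. (f u - g u)\<^sup>2) < e)"

lemma L2_approximableI_tendsto:
  assumes "\<And>n. g n \<in> A" "(\<lambda>n. integral S (\<lambda>u. (f u - g n u)\<^sup>2)) \<longlonglongrightarrow> 0"
  shows "L2_approximable S A f"
  unfolding L2_approximable_def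
proof (intro allI impI)
  fix e :: real assume "0 < e"
  then have "\<forall>\<^sub>F n in sequentially. integral S (\<lambda>u. (f u - g n u)\<^sup>2) < e"
    using order_tendstoD(2)[OF assms(2)] by blast
  then obtain n where "integral S (\<lambda>u. (f u - g n u)\<^sup>2) < e"
    unfolding eventually_sequentially by blast
  then show "\<exists>h\<in>A. integral S (\<lambda>u. (f u - h u)\<^sup>2) < e" using assms(1) by blast
qed

lemma integral_sq_diff_triangle:
  assumes S: "S \<in> sets lebesgue" and f: "L2_on f S" and g: "L2_on g S" and h: "L2_on h S"
  shows "integral S (\<lambda>u. (f u - h u)\<^sup>2)
       \<le> 2 * integral S (\<lambda>u. (f u - g u)\<^sup>2) + 2 * integral S (\<lambda>u. (g u - h u)\<^sup>2)"
proof -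
  have fg: "(\<lambda>u. (f u - g u)\<^sup>2) integrable_on S" and gh: "(\<lambda>u. (g u - h u)\<^sup>2) integrable_on S"
    and fh: "(\<lambda>u. (f u - h u)\<^sup>2) integrable_on S"
    using L2_on_diff[OF S f g] L2_on_diff[OF S g h] L2_on_diff[OF S f h] by (simp_all add: L2_on_def)
  have "integral S (\<lambda>u. (f u - h u)\<^sup>2) \<le> integral S (\<lambda>u. 2 * (f u - g u)\<^sup>2 + 2 * (g u - h u)\<^sup>2)"
  proof (rule integral_le[OF fh])
    show "(\<lambda>u. 2 * (f u - g u)\<^sup>2 + 2 * (g u - h u)\<^sup>2) integrable_on S"
      using fg gh by (intro integrable_add integrable_on_mult_right)
    fix u
    have "0 \<le> ((f u - g u) - (g u - h u))\<^sup>2" by simp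
    then show "(f u - h u)\<^sup>2 \<le> 2 * (f u - g u)\<^sup>2 + 2 * (g u - h u)\<^sup>2"
      by (simp add: power2_eq_square algebra_simps)
  qed
  also have "\<dots> = 2 * integral S (\<lambda>u. (f u - g u)\<^sup>2) + 2 * integral S (\<lambda>u. (g u - h u)\<^sup>2)"
    using fg gh by (simp add: integral_add integrable_on_mult_right)
  finally show ?thesis .
qed

lemma L2_approximable_trans:
  assumes S: "S \<in> sets lebesgue" and f: "L2_on f S"
    and B: "\<And>g. g \<in> B \<Longrightarrow> L2_on g S \<and> L2_approximable S A g"
    and fB: "L2_approximable S B f"
    and A: "\<And>h. h \<in> A \<Longrightarrow> L2_on h S"
  shows "L2_approximable S A f"
  unfolding L2_approximable_def
proof (intro allI impI)
  fix e :: real assume e: "0 < e"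
  have e4: "0 < e/4" using e by simp
  obtain g where g: "g \<in> B" and fg: "integral S (\<lambda>u. (f u - g u)\<^sup>2) < e/4"
    using fB e4 unfolding L2_approximable_def by blast
  obtain h where h: "h \<in> A" and gh: "integral S (\<lambda>u. (g u - h u)\<^sup>2) < e/4"
    using B[OF g] e4 unfolding L2_approximable_def by blast
  have "integral S (\<lambda>u. (f u - h u)\<^sup>2) < e"
    using integral_sq_diff_triangle[OF S f conjunct1[OF B[OF g]] A[OF h]] fg gh by linarith
  then show "\<exists>h\<in>A. integral S (\<lambda>u. (f u - h u)\<^sup>2) < e" using h by blast
qed

lemma integral_tendsto_dominated_off_negligible:
  fixes F :: "nat \<Rightarrow> 'a::euclidean_space \<Rightarrow> real"
  assumes N: "negligible N" and F: "\<And>n. F n integrable_on S" and H: "H integrable_on S"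
    and le: "\<And>n x. x \<in> S \<Longrightarrow> \<bar>F n x\<bar> \<le> H x"
    and lim: "\<And>x. x \<in> S - N \<Longrightarrow> (\<lambda>n. F n x) \<longlonglongrightarrow> G x"
  shows "(\<lambda>n. integral S (F n)) \<longlonglongrightarrow> integral S G"
proof -
  define F' where "F' n x = (if x \<in> N then 0 else F n x)" for n x
  define G' where "G' x = (if x \<in> N then 0 else G x)" for x
  have "(\<lambda>n. integral S (F' n)) \<longlonglongrightarrow> integral S G'"
  proof (rule dominated_convergence(2)[OF _ H])
    show "F' n integrable_on S" for n
      using integrable_spike[OF F N] by (simp add: F'_def)
    show "norm (F' n x) \<le> H x" if "x \<in> S" for n x
      using le[OF that, of n] abs_ge_zero[of "F n x"] by (auto simp: F'_def)
    show "(\<lambda>n. F' n x) \<longlonglongrightarrow> G' x" if "x \<in> S" for x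
      using lim[of x] that by (simp add: F'_def G'_def)
  qed
  moreover have "integral S (F' n) = integral S (F n)" for n
    by (rule integral_spike[OF N]) (simp add: F'_def)
  moreover have "integral S G' = integral S G"
    by (rule integral_spike[OF N]) (simp add: G'_def)
  ultimately show ?thesis by simp
qed

lemma L2_approximable_bounded:
  assumes S: "S \<in> sets lebesgue" and g: "L2_on g S"
  shows "L2_approximable S {h. h \<in> borel_measurable (lebesgue_on S) \<and> (\<exists>M. \<forall>x. \<bar>h x\<bar> \<le> M)} g"
proof (rule L2_approximableI_tendsto)
  define h where "h n x = max (- real n) (min (real n) (g x))" for n x
  have gm: "g \<in> borel_measurable (lebesgue_on S)" using S g by (simp add: L2_on_iff_borel_measurable)
  have hm: "h n \<in> borel_measurable (lebesgue_on S)" for n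
    unfolding h_def using gm by measurable
  show "h n \<in> {h. h \<in> borel_measurable (lebesgue_on S) \<and> (\<exists>M. \<forall>x. \<bar>h x\<bar> \<le> M)}" for n
    using hm by (auto simp: h_def intro!: exI[of _ "real n"])
  have le: "\<bar>(g x - h n x)\<^sup>2\<bar> \<le> (g x)\<^sup>2" for n x
  proof -
    have "\<bar>g x - h n x\<bar> \<le> \<bar>g x\<bar>" by (auto simp: h_def max_def min_def)
    then show ?thesis by (simp add: abs_le_square_iff)
  qed
  have "(\<lambda>n. integral S (\<lambda>x. (g x - h n x)\<^sup>2)) \<longlonglongrightarrow> integral S (\<lambda>x. 0)"
  proof (rule dominated_convergence(2))
    show "(\<lambda>x. (g x)\<^sup>2) integrable_on S" using g by (simp add: L2_on_def)
    show "(\<lambda>x. (g x - h n x)\<^sup>2) integrable_on S" for n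
    proof (rule measurable_bounded_by_integrable_imp_integrable_real[OF _ _ _ S])
      show "(\<lambda>x. (g x - h n x)\<^sup>2) \<in> borel_measurable (lebesgue_on S)"
        using gm hm by measurable
    qed (use le g in \<open>auto simp: L2_on_def\<close>)
    show "norm ((g x - h n x)\<^sup>2) \<le> (g x)\<^sup>2" for n x using le by simp
    fix x
    obtain n0 :: nat where "\<bar>g x\<bar> \<le> real n0" using real_arch_simple by blast
    then have "\<forall>\<^sub>F n in sequentially. (g x - h n x)\<^sup>2 = 0"
      by (intro eventually_sequentiallyI[of n0]) (auto simp: h_def)
    then show "(\<lambda>n. (g x - h n x)\<^sup>2) \<longlonglongrightarrow> 0" by (rule tendsto_eventually)
  qed
  then show "(\<lambda>n. integral S (\<lambda>x. (g x - h n x)\<^sup>2)) \<longlonglongrightarrow> 0" by simp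
qed

lemma L2_approximable_continuous:
  assumes hm: "h \<in> borel_measurable (lebesgue_on {a..b})" and hb: "\<And>x. \<bar>h x\<bar> \<le> M"
  shows "L2_approximable {a..b} {C. continuous_on {a..b} C} h"
proof -
  have M: "0 \<le> M" using abs_ge_zero order_trans hb by blast
  have "h measurable_on {a..b}"
    using hm by (simp add: measurable_on_iff_borel_measurable)
  then obtain N G where N: "negligible N" and G: "\<And>n. continuous_on UNIV (G n)"
    and GL: "\<And>x. x \<notin> N \<Longrightarrow> (\<lambda>n. G n x) \<longlonglongrightarrow> (if x \<in> {a..b} then h x else 0)"
    unfolding measurable_on_def by blast
  define C where "C n x = max (- M) (min M (G n x))" for n x
  have C: "continuous_on {a..b} (C n)" for n
    unfolding C_def by (intro continuous_intros continuous_on_subset[OF G]) auto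
  show ?thesis
  proof (rule L2_approximableI_tendsto)
    show "C n \<in> {C. continuous_on {a..b} C}" for n using C by simp
    have bound: "\<bar>(h x - C n x)\<^sup>2\<bar> \<le> (2 * M)\<^sup>2" for n x
    proof -
      have "\<bar>h x - C n x\<bar> \<le> \<bar>2 * M\<bar>" using hb[of x] M by (auto simp: C_def)
      then show ?thesis by (simp add: abs_le_square_iff)
    qed
    have "(\<lambda>n. integral {a..b} (\<lambda>x. (h x - C n x)\<^sup>2)) \<longlonglongrightarrow> integral {a..b} (\<lambda>x. 0)"
    proof (rule integral_tendsto_dominated_off_negligible[OF N _ integrable_const_ivl bound])
      show "(\<lambda>x. (h x - C n x)\<^sup>2) integrable_on {a..b}" for n
      proof (rule measurable_bounded_by_integrable_imp_integrable_real[where g = "\<lambda>x. (2 * M)\<^sup>2"])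
        show "(\<lambda>x. (h x - C n x)\<^sup>2) \<in> borel_measurable (lebesgue_on {a..b})"
          using hm continuous_imp_measurable_on_sets_lebesgue[OF C, of n] by measurable simp
      qed (rule integrable_const_ivl, rule bound, simp)
      fix x assume x: "x \<in> {a..b} - N"
      then have "(\<lambda>n. C n x) \<longlonglongrightarrow> max (- M) (min M (h x))"
        unfolding C_def using GL[of x] x by (intro tendsto_intros) auto
      moreover have "max (- M) (min M (h x)) = h x" using hb[of x] by (auto simp: abs_le_iff)
      ultimately show "(\<lambda>n. (h x - C n x)\<^sup>2) \<longlonglongrightarrow> 0"
        using tendsto_diff[OF tendsto_const, of _ "h x"] by (force intro: tendsto_eq_intros)
    qed
    then show "(\<lambda>n. integral {a..b} (\<lambda>x. (h x - C n x)\<^sup>2)) \<longlonglongrightarrow> 0" by simp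
  qed
qed

lemma L2_approximable_cos_mult_continuous:
  assumes C: "continuous_on {0..pi/2} C"
  shows "L2_approximable {0..pi/2} {(\<lambda>u. cos u * d u) | d. continuous_on {0..pi/2} d} C"
proof (rule L2_approximableI_tendsto)
  obtain M where CM: "\<forall>u\<in>{0..pi/2}. \<bar>C u\<bar> \<le> M"
    using compact_imp_bounded[OF compact_continuous_image[OF C compact_Icc]]
    by (auto simp: bounded_iff)
  \<comment> \<open>\<open>d n\<close> is \<open>C / cos\<close> wherever \<open>(n + 1) cos u \<ge> 1\<close>, which fails only near \<open>pi/2\<close>\<close>
  define d where "d n u = C u * real (Suc n) / max 1 (real (Suc n) * cos u)" for n u
  have cos_d: "cos u * d n u = C u * (real (Suc n) * cos u / max 1 (real (Suc n) * cos u))" for n u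
    by (simp add: d_def)
  have "continuous_on {0..pi/2} (d n)" for n
    unfolding d_def by (intro continuous_intros C) auto
  then show "(\<lambda>u. cos u * d n u) \<in> {(\<lambda>u. cos u * d u) | d. continuous_on {0..pi/2} d}" for n
    by blast
  have bound: "\<bar>(C u - cos u * d n u)\<^sup>2\<bar> \<le> (2 * M)\<^sup>2" if u: "u \<in> {0..pi/2}" for n u
  proof -
    have "0 \<le> cos u" using u by (intro cos_ge_zero) auto
    then have "\<bar>cos u * d n u\<bar> \<le> \<bar>C u\<bar>"
      unfolding cos_d by (auto simp: abs_mult max_def intro!: mult_left_le)
    then have "\<bar>C u - cos u * d n u\<bar> \<le> \<bar>2 * M\<bar>" using CM u by fastforce
    then show ?thesis by (simp add: abs_le_square_iff)
  qed
  have "(\<lambda>n. integral {0..pi/2} (\<lambda>u. (C u - cos u * d n u)\<^sup>2)) \<longlonglongrightarrow> integral {0..pi/2} (\<lambda>u. 0)"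
  proof (rule integral_tendsto_dominated_off_negligible[OF negligible_sing[of "pi/2"] _ integrable_const_ivl bound])
    show "(\<lambda>u. (C u - cos u * d n u)\<^sup>2) integrable_on {0..pi/2}" for n
      unfolding d_def by (intro integrable_continuous_real continuous_intros C) auto
    fix u assume u: "u \<in> {0..pi/2} - {pi/2}"
    then have cos: "0 < cos u" by (intro cos_gt_zero_pi) auto
    obtain n0 :: nat where n0: "1 / cos u \<le> real n0" using real_arch_simple by blast
    have "(C u - cos u * d n u)\<^sup>2 = 0" if "n0 \<le> n" for n
    proof -
      have "1 \<le> real n0 * cos u" using n0 cos by (simp add: field_simps)
      also have "\<dots> \<le> real (Suc n) * cos u" using that cos by (intro mult_right_mono) auto
      finally show ?thesis unfolding cos_d using cos by (simp add: max_def)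
    qed
    then show "(\<lambda>n. (C u - cos u * d n u)\<^sup>2) \<longlonglongrightarrow> 0"
      by (intro tendsto_eventually eventually_sequentiallyI)
  qed
  then show "(\<lambda>n. integral {0..pi/2} (\<lambda>u. (C u - cos u * d n u)\<^sup>2)) \<longlonglongrightarrow> 0" by simp
qed

lemma L2_approximable_cos_mode_span:
  assumes d: "continuous_on {0..pi/2} d"
  shows "L2_approximable {0..pi/2} (Collect cos_mode_span) (\<lambda>u. cos u * d u)"
  unfolding L2_approximable_def
proof (intro allI impI)
  fix e :: real assume e: "0 < e"
  define r where "r = sqrt (e / pi)"
  have r: "0 < r" "r\<^sup>2 = e / pi" using e by (simp_all add: r_def)
  obtain g where g: "cos_2_algebra g" and dg: "\<forall>x\<in>{0..pi/2}. \<bar>d x - g x\<bar> < r"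
    using cos_2_algebra_uniform_approx[OF d r(1)] by blast
  have P: "cos_mode_span (\<lambda>u. cos u * g u)"
    using cos_mode_span_cos_2_algebra_mult[OF g cos_mode_span_cos_mode[of 0]]
    by (simp add: cos_mode_def mult.commute)
  have "integral {0..pi/2} (\<lambda>u. (cos u * d u - cos u * g u)\<^sup>2) \<le> integral {0..pi/2} (\<lambda>u. r\<^sup>2)"
  proof (rule integral_le)
    show "(\<lambda>u. (cos u * d u - cos u * g u)\<^sup>2) integrable_on {0..pi/2}"
      by (intro integrable_continuous_real continuous_intros d continuous_on_cos_2_algebra[OF g])
    fix u assume u: "u \<in> {0..pi/2}"
    have "\<bar>cos u * d u - cos u * g u\<bar> = \<bar>cos u\<bar> * \<bar>d u - g u\<bar>"
      by (simp add: abs_mult[symmetric] right_diff_distrib)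
    also have "\<dots> \<le> \<bar>d u - g u\<bar>" by (simp add: mult_left_le_one_le)
    also have "\<dots> \<le> \<bar>r\<bar>" using dg u by force
    finally show "(cos u * d u - cos u * g u)\<^sup>2 \<le> r\<^sup>2" by (simp add: abs_le_square_iff)
  qed (rule integrable_const_ivl)
  also have "\<dots> = e / 2" using r(2) by simp
  finally show "\<exists>P\<in>Collect cos_mode_span. integral {0..pi/2} (\<lambda>u. (cos u * d u - P u)\<^sup>2) < e"
    using P e by force
qed

theorem cos_mode_span_dense:
  assumes f: "L2_on f {0..pi/2}"
  shows "L2_approximable {0..pi/2} (Collect cos_mode_span) f"
proof -
  let ?I = "{0..pi/2::real}"
  let ?Cont = "{C :: real \<Rightarrow> real. continuous_on ?I C}"
  let ?CosCont = "{(\<lambda>u. cos u * d u) | d :: real \<Rightarrow> real. continuous_on ?I d}"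
  have I: "?I \<in> sets lebesgue" by simp
  have by_cont: "L2_approximable ?I ?Cont f"
  proof (rule L2_approximable_trans[OF I f _ L2_approximable_bounded[OF I f]])
    fix g :: "real \<Rightarrow> real" assume "g \<in> {h. h \<in> borel_measurable (lebesgue_on ?I) \<and> (\<exists>M. \<forall>x. \<bar>h x\<bar> \<le> M)}"
    then obtain M where gm: "g \<in> borel_measurable (lebesgue_on ?I)" and gM: "\<And>x. \<bar>g x\<bar> \<le> M"
      by blast
    show "L2_on g ?I \<and> L2_approximable ?I ?Cont g"
      using L2_on_bounded[OF gm gM] L2_approximable_continuous[OF gm gM] by simp
  qed (auto intro: L2_on_continuous)
  have by_cos_cont: "L2_approximable ?I ?CosCont f"
  proof (rule L2_approximable_trans[OF I f _ by_cont])
    fix g :: "real \<Rightarrow> real" assume "g \<in> ?Cont"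
    then show "L2_on g ?I \<and> L2_approximable ?I ?CosCont g"
      using L2_approximable_cos_mult_continuous by (simp add: L2_on_continuous)
  qed (auto intro: L2_on_continuous continuous_on_mult[OF continuous_on_cos[OF continuous_on_id]])
  show ?thesis
  proof (rule L2_approximable_trans[OF I f _ by_cos_cont])
    fix g :: "real \<Rightarrow> real" assume "g \<in> ?CosCont"
    then show "L2_on g ?I \<and> L2_approximable ?I (Collect cos_mode_span) g"
      using L2_approximable_cos_mode_span
      by (auto intro: L2_on_continuous continuous_on_mult[OF continuous_on_cos[OF continuous_on_id]])
  qed (simp add: L2_on_continuous continuous_on_cos_mode_span)
qed

lemma integral_abs_le_integral_sq:
  assumes "L2_on h {a..b}" "a \<le> b" "0 < t"
  shows "integral {a..b} (\<lambda>u. \<bar>h u\<bar>) \<le> t * (b - a) / 2 + integral {a..b} (\<lambda>u. (h u)\<^sup>2) / (2 * t)"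
proof -
  have sq: "(\<lambda>u. (h u)\<^sup>2) integrable_on {a..b}" using assms(1) by (simp add: L2_on_def)
  have "integral {a..b} (\<lambda>u. \<bar>h u\<bar>) \<le> integral {a..b} (\<lambda>u. t / 2 + (h u)\<^sup>2 / (2 * t))"
  proof (rule integral_le)
    show "(\<lambda>u. \<bar>h u\<bar>) integrable_on {a..b}"
      using L2_on_absolutely_integrable[OF assms(1)] by (simp add: absolutely_integrable_on_def)
    show "(\<lambda>u. t / 2 + (h u)\<^sup>2 / (2 * t)) integrable_on {a..b}"
      using sq by (intro integrable_add integrable_const_ivl integrable_on_divide)
    fix u
    have "0 \<le> (\<bar>h u\<bar> - t)\<^sup>2" by simp
    then show "\<bar>h u\<bar> \<le> t / 2 + (h u)\<^sup>2 / (2 * t)"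
      using assms(3) by (simp add: field_simps power2_eq_square)
  qed
  also have "\<dots> = t * (b - a) / 2 + integral {a..b} (\<lambda>u. (h u)\<^sup>2) / (2 * t)"
    using assms(2) by (simp add: integral_add[OF integrable_const_ivl integrable_on_divide[OF sq]])
  finally show ?thesis .
qed

corollary cos_mode_span_dense_L1:
  assumes f: "L2_on f {0..pi/2}" and e: "0 < e"
  shows "\<exists>P. cos_mode_span P \<and> integral {0..pi/2} (\<lambda>u. \<bar>f u - P u\<bar>) < e"
proof -
  define t where "t = e / pi"
  have t: "0 < t" using e by (simp add: t_def)
  have "0 < t * e" using t e by simp
  then obtain P where P: "cos_mode_span P" and fP: "integral {0..pi/2} (\<lambda>u. (f u - P u)\<^sup>2) < t * e"
    using cos_mode_span_dense[OF f] unfolding L2_approximable_def by blast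
  have "L2_on (\<lambda>u. f u - P u) {0..pi/2}"
    using L2_on_diff[OF _ f L2_on_continuous[OF continuous_on_cos_mode_span[OF P]]] by simp
  then have "integral {0..pi/2} (\<lambda>u. \<bar>f u - P u\<bar>) \<le> t * (pi/2) / 2 + integral {0..pi/2} (\<lambda>u. (f u - P u)\<^sup>2) / (2 * t)"
    using integral_abs_le_integral_sq[OF _ pi_half_ge_zero t] by simp
  also have "\<dots> < e / 4 + e / 2"
    using fP t by (intro add_le_less_mono) (simp_all add: t_def field_simps)
  finally show ?thesis using P e by (intro exI[of _ P]) simp
qed

section \<open>Completeness and Parseval's identity\<close>

lemma finite_subset_symmetric_interval:
  assumes "finite (X :: int set)" "nat (Max (insert 0 (abs ` X))) \<le> M"
  shows "X \<subseteq> {-int M..int M}"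
proof
  fix k assume "k \<in> X"
  then have "\<bar>k\<bar> \<le> Max (insert 0 (abs ` X))" using assms(1) by (intro Max_ge) auto
  also have "\<dots> \<le> int M" using assms(2) by (simp add: nat_le_iff)
  finally show "k \<in> {-int M..int M}" by (auto simp: abs_le_iff)
qed

lemma filterlim_symmetric_intervals:
  "filterlim (\<lambda>N::nat. {-int N..int N}) (finite_subsets_at_top UNIV) sequentially"
  unfolding filterlim_finite_subsets_at_top
proof (intro allI impI)
  fix X :: "int set" assume "finite X \<and> X \<subseteq> UNIV"
  then show "\<forall>\<^sub>F M in sequentially. finite {-int M..int M} \<and> X \<subseteq> {-int M..int M} \<and> {-int M..int M} \<subseteq> UNIV"
    using finite_subset_symmetric_interval by (intro eventually_sequentiallyI) simp
qed

lemma has_sum_of_symmetric_partial_sums: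
  fixes g :: "int \<Rightarrow> real"
  assumes nonneg: "\<And>k. 0 \<le> g k" and lim: "(\<lambda>N. \<Sum>k\<in>{-int N..int N}. g k) \<longlonglongrightarrow> L"
  shows "(g has_sum L) UNIV"
proof -
  have "incseq (\<lambda>N. \<Sum>k\<in>{-int N..int N}. g k)"
    by (intro incseq_SucI sum_mono2) (auto simp: nonneg)
  then have partial_le: "(\<Sum>k\<in>{-int N..int N}. g k) \<le> L" for N
    using lim by (rule incseq_le)
  have bounded: "sum g X \<le> L" if X: "finite X" for X
  proof -
    let ?N = "nat (Max (insert 0 (abs ` X)))"
    have "X \<subseteq> {-int ?N..int ?N}" by (rule finite_subset_symmetric_interval[OF X order_refl])
    then have "sum g X \<le> (\<Sum>k\<in>{-int ?N..int ?N}. g k)"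
      by (intro sum_mono2) (auto simp: nonneg)
    then show ?thesis using partial_le[of ?N] by linarith
  qed
  have "\<forall>\<^sub>F X in finite_subsets_at_top UNIV. sum g X \<le> L"
    by (rule eventually_finite_subsets_at_top_weakI) (rule bounded)
  then have summable: "g summable_on UNIV"
    by (rule nonneg_bounded_partial_sums_imp_summable_on[OF nonneg])
  have "(\<lambda>N. \<Sum>k\<in>{-int N..int N}. g k) \<longlonglongrightarrow> infsum g UNIV"
    using filterlim_compose[OF infsum_tendsto[OF summable] filterlim_symmetric_intervals] .
  then have "infsum g UNIV = L" using lim by (rule LIMSEQ_unique)
  then show ?thesis using summable by (simp add: has_sum_iff)
qed

theorem mode_sum_coeff_k_tendsto:
  assumes f: "L2_on f {0..pi/2}"
  shows "(\<lambda>N. integral {0..pi/2} (\<lambda>u. (f u - mode_sum (coeff_k f) {-int N..int N} u)\<^sup>2)) \<longlonglongrightarrow> 0"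
proof (rule LIMSEQ_I)
  fix e :: real assume "0 < e"
  then obtain P where P: "cos_mode_span P" and fP: "integral {0..pi/2} (\<lambda>u. (f u - P u)\<^sup>2) < e"
    using cos_mode_span_dense[OF f] unfolding L2_approximable_def by blast
  obtain d N where d: "\<And>M. N \<le> M \<Longrightarrow> P = mode_sum d {-int M..int M}"
    using cos_mode_span_repr[OF P] by blast
  have "\<bar>integral {0..pi/2} (\<lambda>u. (f u - mode_sum (coeff_k f) {-int M..int M} u)\<^sup>2)\<bar> < e"
    if "N \<le> M" for M
  proof -
    have "0 \<le> integral {0..pi/2} (\<lambda>u. (f u - mode_sum (coeff_k f) {-int M..int M} u)\<^sup>2)"
      using L2_on_diff[OF _ f L2_on_mode_sum] by (intro integral_nonneg) (simp_all add: L2_on_def)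
    moreover have "integral {0..pi/2} (\<lambda>u. (f u - mode_sum (coeff_k f) {-int M..int M} u)\<^sup>2)
        \<le> integral {0..pi/2} (\<lambda>u. (f u - P u)\<^sup>2)"
      unfolding d[OF that] by (rule integral_sq_dist_coeff_k_le[OF f]) simp
    ultimately show ?thesis using fP by linarith
  qed
  then show "\<exists>N. \<forall>M\<ge>N. norm (integral {0..pi/2} (\<lambda>u. (f u - mode_sum (coeff_k f) {-int M..int M} u)\<^sup>2) - 0) < e"
    by (intro exI[of _ N] allI impI) simp
qed

theorem has_sum_coeff_k_sq:
  assumes f: "L2_on f {0..pi/2}"
  shows "((\<lambda>k. (coeff_k f k)\<^sup>2) has_sum (4 / pi * integral {0..pi/2} (\<lambda>u. (f u)\<^sup>2))) UNIV"
proof (rule has_sum_of_symmetric_partial_sums)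
  let ?err = "\<lambda>N. integral {0..pi/2} (\<lambda>u. (f u - mode_sum (coeff_k f) {-int N..int N} u)\<^sup>2)"
  have "(\<lambda>N. 4 / pi * (integral {0..pi/2} (\<lambda>u. (f u)\<^sup>2) - ?err N))
      \<longlonglongrightarrow> 4 / pi * (integral {0..pi/2} (\<lambda>u. (f u)\<^sup>2) - 0)"
    by (intro tendsto_intros mode_sum_coeff_k_tendsto[OF f])
  then show "(\<lambda>N. \<Sum>k\<in>{-int N..int N}. (coeff_k f k)\<^sup>2) \<longlonglongrightarrow> 4 / pi * integral {0..pi/2} (\<lambda>u. (f u)\<^sup>2)"
    by (simp add: integral_sq_dist_coeff_k[OF f])
qed simp

corollary has_sum_coeff_k_mult:
  assumes f: "L2_on f {0..pi/2}" and g: "L2_on g {0..pi/2}"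
  shows "((\<lambda>k. coeff_k f k * coeff_k g k) has_sum (4 / pi * integral {0..pi/2} (\<lambda>u. f u * g u))) UNIV"
proof -
  let ?I = "{0..pi/2::real}"
  let ?A = "integral ?I (\<lambda>u. (f u + g u)\<^sup>2)" and ?B = "integral ?I (\<lambda>u. (f u - g u)\<^sup>2)"
  have I: "?I \<in> sets lebesgue" by simp
  have "((\<lambda>k. 1/4 * (coeff_k (\<lambda>u. f u + g u) k)\<^sup>2 + -1/4 * (coeff_k (\<lambda>u. f u - g u) k)\<^sup>2)
      has_sum (1/4 * (4 / pi * ?A) + -1/4 * (4 / pi * ?B))) UNIV"
    by (intro has_sum_add has_sum_cmult_right has_sum_coeff_k_sq L2_on_add L2_on_diff I f g)
  moreover have "(\<lambda>k. 1/4 * (coeff_k (\<lambda>u. f u + g u) k)\<^sup>2 + -1/4 * (coeff_k (\<lambda>u. f u - g u) k)\<^sup>2)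
      = (\<lambda>k. coeff_k f k * coeff_k g k)"
    by (simp add: coeff_k_add[OF f g] coeff_k_diff[OF f g] power2_eq_square algebra_simps)
  moreover have "?A - ?B = 4 * integral ?I (\<lambda>u. f u * g u)"
  proof -
    have "?A - ?B = integral ?I (\<lambda>u. (f u + g u)\<^sup>2 - (f u - g u)\<^sup>2)"
      using L2_on_add[OF I f g] L2_on_diff[OF I f g] by (simp add: L2_on_def integral_diff)
    also have "\<dots> = integral ?I (\<lambda>u. 4 * (f u * g u))"
      by (simp add: power2_eq_square algebra_simps)
    finally show ?thesis by simp
  qed
  then have "1/4 * (4 / pi * ?A) + -1/4 * (4 / pi * ?B) = 4 / pi * integral ?I (\<lambda>u. f u * g u)"
    by (simp add: field_simps)
  ultimately show ?thesis by simp
qed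

section \<open>The operator T\<close>

lemma T_op_cos_mode:
  assumes v: "v \<in> {0..pi/2}"
  shows "T_op (cos_mode k) v = cos_mode k v / (4 * real_of_int k + 1)"
proof -
  define a where "a = 4 * real_of_int k + 1"
  have "T_op (cos_mode k) v = sin (a * (pi/2 - v)) / a"
    unfolding T_op_def cos_mode_def a_def[symmetric]
    using has_integral_cos_mult[of a "pi/2 - v"] frequency_nonzero v
    by (simp add: a_def integral_unique)
  also have "sin (a * (pi/2 - v)) = cos (a * v - 2 * pi * real_of_int k)"
    by (simp add: sin_cos_eq a_def algebra_simps)
  also have "\<dots> = cos (a * v)"
    by (simp add: cos_diff)
  finally show ?thesis by (simp only: cos_mode_def[of k v] a_def)
qed

lemma T_op_mode_sum:
  assumes "finite K" "v \<in> {0..pi/2}"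
  shows "T_op (mode_sum d K) v = mode_sum (\<lambda>k. d k / (4 * real_of_int k + 1)) K v"
proof -
  have "(\<lambda>u. d k * cos_mode k u) integrable_on {0..pi/2 - v}" for k
    unfolding cos_mode_def by (intro integrable_continuous_real continuous_intros)
  then have "T_op (mode_sum d K) v = (\<Sum>k\<in>K. d k * T_op (cos_mode k) v)"
    using assms(1) by (simp add: T_op_def mode_sum_def integral_sum)
  then show ?thesis
    using T_op_cos_mode[OF assms(2)] by (simp add: mode_sum_def)
qed

lemma coeff_k_T_op_cos_mode_span:
  assumes "cos_mode_span P"
  shows "coeff_k (T_op P) j = coeff_k P j / (4 * real_of_int j + 1)"
proof -
  obtain d N where P: "P = mode_sum d {-int N..int N}"
    using cos_mode_span_repr[OF assms] by blast
  have "coeff_k (T_op P) j = coeff_k (mode_sum (\<lambda>k. d k / (4 * real_of_int k + 1)) {-int N..int N}) j"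
    unfolding P by (rule coeff_k_cong) (simp add: T_op_mode_sum)
  then show ?thesis by (simp add: P coeff_k_mode_sum)
qed

lemma continuous_on_T_op:
  assumes "f integrable_on {0..pi/2}"
  shows "continuous_on {0..pi/2} (T_op f)"
proof -
  have "continuous_on {0..pi/2} (\<lambda>x. integral {0..x} f)"
    by (rule indefinite_integral_continuous_1[OF assms])
  then have "continuous_on {0..pi/2} (\<lambda>v. integral {0..pi/2 - v} f)"
    by (rule continuous_on_compose2) (auto intro: continuous_on_diff continuous_on_id)
  then show ?thesis by (simp add: T_op_def)
qed

lemma L2_on_T_op: "L2_on f {0..pi/2} \<Longrightarrow> L2_on (T_op f) {0..pi/2}"
  by (rule L2_on_continuous[OF continuous_on_T_op[OF L2_on_integrable]])

lemma T_op_diff: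
  assumes "f integrable_on {0..pi/2}" "g integrable_on {0..pi/2}" "v \<in> {0..pi/2}"
  shows "T_op (\<lambda>u. f u - g u) v = T_op f v - T_op g v"
proof -
  have "{0..pi/2 - v} \<subseteq> {0..pi/2}" using assms(3) by auto
  then show ?thesis
    using assms(1,2) by (simp add: T_op_def integral_diff integrable_on_subinterval)
qed

lemma abs_T_op_le:
  assumes "f absolutely_integrable_on {0..pi/2}" "v \<in> {0..pi/2}"
  shows "\<bar>T_op f v\<bar> \<le> integral {0..pi/2} (\<lambda>u. \<bar>f u\<bar>)"
proof -
  have sub: "{0..pi/2 - v} \<subseteq> {0..pi/2}" using assms(2) by auto
  have f: "f integrable_on {0..pi/2 - v}" and abs: "(\<lambda>u. \<bar>f u\<bar>) integrable_on {0..pi/2 - v}"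
    using assms(1) integrable_on_subinterval[OF _ sub] by (auto simp: absolutely_integrable_on_def)
  have "\<bar>T_op f v\<bar> \<le> integral {0..pi/2 - v} (\<lambda>u. \<bar>f u\<bar>)"
    unfolding T_op_def using integral_norm_bound_integral[OF f abs] by simp
  also have "\<dots> \<le> integral {0..pi/2} (\<lambda>u. \<bar>f u\<bar>)"
    using assms(1) by (intro integral_subset_le[OF sub abs]) (auto simp: absolutely_integrable_on_def)
  finally show ?thesis .
qed

lemma abs_coeff_k_le:
  assumes "(\<lambda>u. f u * cos_mode k u) integrable_on {0..pi/2}" "B integrable_on {0..pi/2}"
    and "\<And>u. u \<in> {0..pi/2} \<Longrightarrow> \<bar>f u\<bar> \<le> B u"
  shows "\<bar>coeff_k f k\<bar> \<le> 4 / pi * integral {0..pi/2} B"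
proof -
  have "\<bar>integral {0..pi/2} (\<lambda>u. f u * cos_mode k u)\<bar> \<le> integral {0..pi/2} B"
  proof (rule integral_norm_bound_integral[OF assms(1,2), unfolded real_norm_def])
    fix u assume "u \<in> {0..pi/2}"
    have "\<bar>f u * cos_mode k u\<bar> \<le> \<bar>f u\<bar>"
      using mult_left_le[OF abs_cos_le_one abs_ge_zero] by (simp add: abs_mult cos_mode_def)
    then show "\<bar>f u * cos_mode k u\<bar> \<le> B u" using assms(3)[OF \<open>u \<in> _\<close>] by linarith
  qed
  then show ?thesis by (simp add: coeff_k_cos_mode abs_mult divide_right_mono)
qed

definition T_defect :: "(real \<Rightarrow> real) \<Rightarrow> int \<Rightarrow> real" where
  "T_defect g j = coeff_k (T_op g) j - coeff_k g j / (4 * real_of_int j + 1)"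

lemma T_defect_diff:
  assumes g: "L2_on g {0..pi/2}" and h: "L2_on h {0..pi/2}"
  shows "T_defect (\<lambda>u. g u - h u) j = T_defect g j - T_defect h j"
proof -
  have "coeff_k (T_op (\<lambda>u. g u - h u)) j = coeff_k (\<lambda>v. T_op g v - T_op h v) j"
    by (intro coeff_k_cong T_op_diff L2_on_integrable g h)
  also have "\<dots> = coeff_k (T_op g) j - coeff_k (T_op h) j"
    by (intro coeff_k_diff L2_on_T_op g h)
  finally show ?thesis
    by (simp add: T_defect_def coeff_k_diff[OF g h] diff_divide_distrib)
qed

lemma abs_T_defect_le:
  assumes h: "L2_on h {0..pi/2}"
  shows "\<bar>T_defect h j\<bar> \<le> (2 + 4 / pi / \<bar>4 * real_of_int j + 1\<bar>) * integral {0..pi/2} (\<lambda>u. \<bar>h u\<bar>)"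
proof -
  let ?n = "integral {0..pi/2} (\<lambda>u. \<bar>h u\<bar>)"
  have habs: "h absolutely_integrable_on {0..pi/2}" by (rule L2_on_absolutely_integrable[OF h])
  have "\<bar>coeff_k (T_op h) j\<bar> \<le> 4 / pi * integral {0..pi/2} (\<lambda>u. ?n)"
    using abs_T_op_le[OF habs] L2_on_mult_integrable[OF _ L2_on_T_op[OF h] L2_on_cos_mode]
    by (intro abs_coeff_k_le integrable_const_ivl) simp_all
  then have T: "\<bar>coeff_k (T_op h) j\<bar> \<le> 2 * ?n" by simp
  have "\<bar>coeff_k h j\<bar> \<le> 4 / pi * ?n"
    using L2_on_mult_integrable[OF _ h L2_on_cos_mode] habs
    by (intro abs_coeff_k_le) (simp_all add: absolutely_integrable_on_def)
  then have "\<bar>coeff_k h j\<bar> / \<bar>4 * real_of_int j + 1\<bar> \<le> 4 / pi * ?n / \<bar>4 * real_of_int j + 1\<bar>"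
    by (rule divide_right_mono) simp
  then have C: "\<bar>coeff_k h j / (4 * real_of_int j + 1)\<bar> \<le> 4 / pi / \<bar>4 * real_of_int j + 1\<bar> * ?n"
    by simp
  have "\<bar>T_defect h j\<bar> \<le> \<bar>coeff_k (T_op h) j\<bar> + \<bar>coeff_k h j / (4 * real_of_int j + 1)\<bar>"
    unfolding T_defect_def by (rule abs_triangle_ineq4)
  also have "\<dots> \<le> 2 * ?n + 4 / pi / \<bar>4 * real_of_int j + 1\<bar> * ?n"
    using T C by (rule add_mono)
  finally show ?thesis by (simp only: distrib_right)
qed

lemma coeff_k_T_op:
  assumes g: "L2_on g {0..pi/2}"
  shows "coeff_k (T_op g) j = coeff_k g j / (4 * real_of_int j + 1)"
proof -
  let ?K = "2 + 4 / pi / \<bar>4 * real_of_int j + 1\<bar>"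
  have K: "0 < ?K" by (simp add: add_pos_nonneg)
  have "\<bar>T_defect g j\<bar> \<le> 0 + e" if e: "0 < e" for e
  proof -
    obtain P where P: "cos_mode_span P" and gP: "integral {0..pi/2} (\<lambda>u. \<bar>g u - P u\<bar>) < e / ?K"
      using cos_mode_span_dense_L1[OF g] e K by (meson divide_pos_pos)
    have LP: "L2_on P {0..pi/2}" using P by (simp add: L2_on_continuous continuous_on_cos_mode_span)
    have "T_defect g j = T_defect (\<lambda>u. g u - P u) j"
      using T_defect_diff[OF g LP] coeff_k_T_op_cos_mode_span[OF P] by (simp add: T_defect_def)
    also have "\<bar>\<dots>\<bar> \<le> ?K * integral {0..pi/2} (\<lambda>u. \<bar>g u - P u\<bar>)"
      by (rule abs_T_defect_le[OF L2_on_diff[OF _ g LP]]) simp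
    also have "\<dots> < e" using gP K by (simp add: field_simps)
    finally show ?thesis by simp
  qed
  then have "T_defect g j = 0" using field_le_epsilon[of "\<bar>T_defect g j\<bar>" 0] by simp
  then show ?thesis by (simp add: T_defect_def)
qed

lemma L2_on_T_op_power: "L2_on f {0..pi/2} \<Longrightarrow> L2_on ((T_op ^^ n) f) {0..pi/2}"
  by (induction n) (simp_all add: L2_on_T_op)

lemma coeff_k_T_op_power:
  assumes "L2_on f {0..pi/2}"
  shows "coeff_k ((T_op ^^ n) f) k = coeff_k f k / (4 * real_of_int k + 1) ^ n"
  by (induction n) (simp_all add: coeff_k_T_op L2_on_T_op_power[OF assms] field_simps frequency_nonzero)

theorem corollary3p2:
  fixes f :: "real \<Rightarrow> real"
  assumes "L2_on f {0..pi/2}"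
  shows "((\<lambda>N::nat. integral {0..pi/2}
            (\<lambda>u. (f u - (\<Sum>k\<in>{-int N..int N}. coeff_k f k * cos ((4 * real_of_int k + 1) * u)))\<^sup>2))
           \<longlonglongrightarrow> 0) \<and>
         (\<forall>n::nat. (\<lambda>k::int. (coeff_k f k)\<^sup>2 / (4 * real_of_int k + 1) ^ n) summable_on UNIV \<and>
           integral {0..pi/2} (\<lambda>u. f u * (T_op ^^ n) f u)
             = pi / 4 * (\<Sum>\<^sub>\<infinity>k::int. (coeff_k f k)\<^sup>2 / (4 * real_of_int k + 1) ^ n))"
proof (intro conjI allI)
  show "(\<lambda>N::nat. integral {0..pi/2}
      (\<lambda>u. (f u - (\<Sum>k\<in>{-int N..int N}. coeff_k f k * cos ((4 * real_of_int k + 1) * u)))\<^sup>2)) \<longlonglongrightarrow> 0"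
    using mode_sum_coeff_k_tendsto[OF assms] by (simp add: mode_sum_def cos_mode_def)
  fix n :: nat
  have "((\<lambda>k. (coeff_k f k)\<^sup>2 / (4 * real_of_int k + 1) ^ n)
      has_sum (4 / pi * integral {0..pi/2} (\<lambda>u. f u * (T_op ^^ n) f u))) UNIV"
    using has_sum_coeff_k_mult[OF assms L2_on_T_op_power[OF assms]]
    by (simp add: coeff_k_T_op_power[OF assms] power2_eq_square)
  then show "(\<lambda>k. (coeff_k f k)\<^sup>2 / (4 * real_of_int k + 1) ^ n) summable_on UNIV"
    and "integral {0..pi/2} (\<lambda>u. f u * (T_op ^^ n) f u)
      = pi / 4 * (\<Sum>\<^sub>\<infinity>k. (coeff_k f k)\<^sup>2 / (4 * real_of_int k + 1) ^ n)"
    by (auto simp: has_sum_iff)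
qed

end
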